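(* Suppose every selected context vector takes one of finitely many values $x_{(1)},\dots,x_{(N)}\in\mathbb R^d$, and let $A_t=I_d+\sum_{\tau=1}^tx_{\tau,a_\tau}x_{\tau,a_\tau}^\top$ (as in the AdaLinUCB algorithm). For $n=1,\dots,N$ let $m_{t,(n)}=\sum_{\tau=1}^t\mathbb 1\{x_{\tau,a_\tau}=x_{(n)}\}$. Then for every $t\ge1$ and every $n=1,\dots,N$, $$\|x_{(n)}\|_{A_{t-1}^{-1}}\le\sqrt{\frac{d}{m_{t-1,(n)}}}.$$
   Context: For a positive definite matrix $A$, $\|x\|_A=\sqrt{x^\top Ax}$. $x_{\tau,a_\tau}$ is the context vector of the arm selected at slot $\tau$; $A_0=I_d$. *)

theory Defs
  imports "HOL-Analysis.Analysis"
begin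

definition outer :: "real^'d \<Rightarrow> real^'d \<Rightarrow> real^'d^'d" where
  "outer x y = (\<chi> i j. x $ i * y $ j)"

definition wnorm :: "real^'d^'d \<Rightarrow> real^'d \<Rightarrow> real" where
  "wnorm A x = sqrt (x \<bullet> (A *v x))"

text \<open>Design matrix A_t = I_d + sum_{tau=1}^t x_tau x_tau^T, where xs tau is the
  context vector of the arm selected at slot tau.\<close>
definition design :: "(nat \<Rightarrow> real^'d) \<Rightarrow> nat \<Rightarrow> real^'d^'d" where
  "design xs t = mat 1 + (\<Sum>\<tau>=1..t. outer (xs \<tau>) (xs \<tau>))"

definition count_sel :: "(nat \<Rightarrow> real^'d) \<Rightarrow> nat \<Rightarrow> real^'d \<Rightarrow> nat" where
  "count_sel xs t v = card {\<tau> \<in> {1..t}. xs \<tau> = v}"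

end

theory Submission
  imports Defs
begin

text \<open>Let \<open>y = A\<^sup>-\<^sup>1 v\<close>, so that \<open>s = v \<bullet> y\<close> is the squared weighted norm. Then
  \<open>s = y \<bullet> A y = \<parallel>y\<parallel>\<^sup>2 + \<Sum>\<^sub>\<tau> (x\<^sub>\<tau> \<bullet> y)\<^sup>2\<close>, and each of the \<open>m\<close> slots with \<open>x\<^sub>\<tau> = v\<close>
  contributes \<open>s\<^sup>2\<close> to the sum. Hence \<open>m s\<^sup>2 \<le> s\<close>, i.e. \<open>s \<le> 1/m \<le> d/m\<close>. The argument
  never uses that the contexts take only finitely many values.\<close>

lemma invertible_iff_ker_trivial:
  fixes A :: "'a::field^'n^'n"
  shows "invertible A \<longleftrightarrow> (\<forall>x. A *v x = 0 \<longrightarrow> x = 0)"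
  by (simp add: invertible_left_inverse matrix_left_invertible_ker)

lemma matrix_mul_matrix_inv:
  fixes A :: "'a::field^'n^'n"
  assumes "invertible A"
  shows "A ** matrix_inv A = mat 1"
proof -
  have "A ** matrix_inv A = mat 1 \<and> matrix_inv A ** A = mat 1"
    using assms unfolding invertible_def matrix_inv_def by (rule someI_ex)
  then show ?thesis ..
qed

lemma outer_mult_vector: "outer x z *v y = (z \<bullet> y) *\<^sub>R x"
  by (simp add: vec_eq_iff outer_def matrix_vector_mult_def inner_vec_def
      sum_distrib_left mult.commute mult.left_commute)

lemma sum_matrix_vector_mult: "sum f S *v y = (\<Sum>i\<in>S. f i *v y)"
  by (induction S rule: infinite_finite_induct) (auto simp: matrix_vector_mult_add_rdistrib)

lemma design_mult_vector:
  "design xs t *v y = y + (\<Sum>\<tau>=1..t. (xs \<tau> \<bullet> y) *\<^sub>R xs \<tau>)"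
  by (simp add: design_def matrix_vector_mult_add_rdistrib sum_matrix_vector_mult
      outer_mult_vector)

lemma design_quadratic_form:
  "y \<bullet> (design xs t *v y) = y \<bullet> y + (\<Sum>\<tau>=1..t. (xs \<tau> \<bullet> y)\<^sup>2)"
  by (simp add: design_mult_vector inner_add_right inner_sum_right power2_eq_square
      inner_commute)

lemma design_invertible: "invertible (design xs t)"
  unfolding invertible_iff_ker_trivial
proof (intro allI impI)
  fix y assume "design xs t *v y = 0"
  then have "y \<bullet> y + (\<Sum>\<tau>=1..t. (xs \<tau> \<bullet> y)\<^sup>2) = 0"
    by (metis design_quadratic_form inner_zero_right)
  moreover have "(\<Sum>\<tau>=1..t. (xs \<tau> \<bullet> y)\<^sup>2) \<ge> 0"
    by (simp add: sum_nonneg)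
  ultimately show "y = 0"
    by (smt (verit) inner_ge_zero inner_eq_zero_iff)
qed

lemma le_inverse_if_mult_square_le:
  fixes m s :: real
  assumes "m > 0" and "m * s\<^sup>2 \<le> s"
  shows "s \<le> 1 / m"
proof (cases "s > 0")
  case True
  then have "m * s \<le> 1"
    using assms(2) by (simp add: power2_eq_square)
  then show ?thesis
    using assms(1) by (simp add: field_simps)
next
  case False
  moreover have "0 < 1 / m"
    using assms(1) by simp
  ultimately show ?thesis
    by linarith
qed

lemma design_inverse_quadratic_form_le:
  assumes "count_sel xs t v > 0"
  shows "v \<bullet> (matrix_inv (design xs t) *v v) \<le> 1 / real (count_sel xs t v)"
proof -
  define y where "y = matrix_inv (design xs t) *v v"
  define s where "s = v \<bullet> y"
  have "design xs t *v y = v"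
    by (simp add: y_def matrix_vector_mul_assoc matrix_mul_matrix_inv design_invertible)
  then have s_expand: "s = y \<bullet> y + (\<Sum>\<tau>=1..t. (xs \<tau> \<bullet> y)\<^sup>2)"
    unfolding s_def by (metis design_quadratic_form inner_commute)
  let ?S = "{\<tau> \<in> {1..t}. xs \<tau> = v}"
  have "real (count_sel xs t v) * s\<^sup>2 = (\<Sum>\<tau>\<in>?S. (xs \<tau> \<bullet> y)\<^sup>2)"
    by (simp add: count_sel_def s_def)
  also have "\<dots> \<le> (\<Sum>\<tau>=1..t. (xs \<tau> \<bullet> y)\<^sup>2)"
    by (rule sum_mono2) auto
  also have "\<dots> \<le> s"
    using s_expand by simp
  finally show ?thesis
    using assms unfolding s_def y_def by (intro le_inverse_if_mult_square_le) auto
qed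

theorem lemma4:
  fixes xs :: "nat \<Rightarrow> real^'d" and xval :: "nat \<Rightarrow> real^'d" and N :: nat
    and t n :: nat
  assumes finite_vals: "\<And>\<tau>. \<tau> \<ge> 1 \<Longrightarrow> \<exists>k\<in>{1..N}. xs \<tau> = xval k"
    and t: "t \<ge> 1"
    and n: "n \<in> {1..N}"
    and m_pos: "count_sel xs (t - 1) (xval n) > 0"
  shows "wnorm (matrix_inv (design xs (t - 1))) (xval n)
           \<le> sqrt (real CARD('d) / real (count_sel xs (t - 1) (xval n)))"
proof -
  let ?m = "real (count_sel xs (t - 1) (xval n))"
  have "xval n \<bullet> (matrix_inv (design xs (t - 1)) *v xval n) \<le> 1 / ?m"
    using m_pos by (rule design_inverse_quadratic_form_le)
  also have "\<dots> \<le> real CARD('d) / ?m"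
    using m_pos by (intro divide_right_mono) auto
  finally show ?thesis
    unfolding wnorm_def by (rule real_sqrt_le_mono)
qed

end
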